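(* Let $f:[0,\infty)\to\mathbb{R}$ be a continuous superquadratic function and $\Phi:\mathbb{M}_n\to\mathbb{M}_m$ a unital positive linear map. Then for every positive semidefinite $A\in\mathbb{M}_n^+$, $$\mathrm{Tr}\, f(\Phi(A))\le \mathrm{Tr}\,\Phi(f(A))-\min\left\{\sum_{j=1}^{m}\Big\langle \Phi\big(f(|A-\langle\Phi(A)\mathbf{u}_j,\mathbf{u}_j\rangle I|)\big)\mathbf{u}_j,\mathbf{u}_j\Big\rangle\right\},$$ where the minimum is taken over all orthonormal bases $\{\mathbf{u}_1,\dots,\mathbf{u}_m\}$ of $\mathbb{C}^m$.
   Context: A function $f:[0,\infty)\to\mathbb{R}$ is called superquadratic if for every $s\ge 0$ there exists a constant $C_s\in\mathbb{R}$ such that $f(t)\ge f(s)+C_s(t-s)+f(|t-s|)$ for all $t\ge0$. A linear map $\Phi$ is positive if it maps positive semidefinite matrices to positive semidefinite matrices and unital if $\Phi(I)=I$. $f(X)$ is defined by the spectral functional calculus, $|X|=(X^*X)^{1/2}$, $\langle\cdot,\cdot\rangle$ is the standard inner product, and $\mathrm{Tr}$ is the usual matrix trace. *)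

theory Defs
  imports "HOL-Analysis.Analysis"
begin

text \<open>Complex square matrices of size n are modelled as complex^'n^'n, 'n a finite type
  with CARD('n) = n.\<close>

definition cinner :: "complex^'n \<Rightarrow> complex^'n \<Rightarrow> complex" where
  "cinner x y = (\<Sum>i\<in>UNIV. x$i * cnj (y$i))"

definition adj :: "complex^'n^'m \<Rightarrow> complex^'m^'n" where
  "adj A = (\<chi> i j. cnj (A$j$i))"

definition cscale :: "complex \<Rightarrow> complex^'n^'m \<Rightarrow> complex^'n^'m" where
  "cscale c A = (\<chi> i j. c * A$i$j)"

definition hermitian :: "complex^'n^'n \<Rightarrow> bool" where
  "hermitian A \<longleftrightarrow> adj A = A"

definition psd :: "complex^'n^'n \<Rightarrow> bool" where
  "psd A \<longleftrightarrow> hermitian A \<and> (\<forall>x. 0 \<le> Re (cinner (A *v x) x))"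

definition unitary :: "complex^'n^'n \<Rightarrow> bool" where
  "unitary U \<longleftrightarrow> adj U ** U = mat 1 \<and> U ** adj U = mat 1"

definition diagm :: "('n \<Rightarrow> complex) \<Rightarrow> complex^'n^'n" where
  "diagm d = (\<chi> i j. if i = j then d i else 0)"

definition matfun :: "(real \<Rightarrow> real) \<Rightarrow> complex^'n^'n \<Rightarrow> complex^'n^'n" where
  "matfun f A = (SOME B. \<exists>U d. unitary U \<and> A = U ** diagm (\<lambda>i. complex_of_real (d i)) ** adj U
      \<and> B = U ** diagm (\<lambda>i. complex_of_real (f (d i))) ** adj U)"

definition mabs :: "complex^'n^'n \<Rightarrow> complex^'n^'n" where
  "mabs X = matfun sqrt (adj X ** X)"

definition superquadratic :: "(real \<Rightarrow> real) \<Rightarrow> bool" where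
  "superquadratic f \<longleftrightarrow> (\<forall>s\<ge>0. \<exists>C. \<forall>t\<ge>0. f t \<ge> f s + C * (t - s) + f \<bar>t - s\<bar>)"

definition clinear_map :: "(complex^'n^'n \<Rightarrow> complex^'m^'m) \<Rightarrow> bool" where
  "clinear_map \<Phi> \<longleftrightarrow> (\<forall>X Y. \<Phi> (X + Y) = \<Phi> X + \<Phi> Y) \<and> (\<forall>c X. \<Phi> (cscale c X) = cscale c (\<Phi> X))"

definition positive_map :: "(complex^'n^'n \<Rightarrow> complex^'m^'m) \<Rightarrow> bool" where
  "positive_map \<Phi> \<longleftrightarrow> (\<forall>X. psd X \<longrightarrow> psd (\<Phi> X))"

definition unital_map :: "(complex^'n^'n \<Rightarrow> complex^'m^'m) \<Rightarrow> bool" where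
  "unital_map \<Phi> \<longleftrightarrow> \<Phi> (mat 1) = mat 1"

text \<open>Orthonormal bases of C^m, indexed by 'm (so they consist of exactly m vectors).\<close>
definition orthonormal_basis :: "('m \<Rightarrow> complex^'m) \<Rightarrow> bool" where
  "orthonormal_basis u \<longleftrightarrow> (\<forall>i j. cinner (u i) (u j) = (if i = j then 1 else 0))"

end

theory Submission
  imports Defs
begin

text \<open>Write \<open>A = V diag(a) V*\<close> and fix a unit vector \<open>u\<close>. Since \<open>\<Phi>\<close> is linear, positive and
  unital, \<open>g \<mapsto> \<langle>\<Phi>(g(A)) u, u\<rangle>\<close> is a state on functions of the eigenvalues \<open>a\<^sub>k\<close>: linear,
  monotone and equal to \<open>c\<close> on the constant \<open>c\<close>. Applying it to the supporting inequality
  \<open>f(a\<^sub>k) \<ge> f(s) + C (a\<^sub>k - s) + f(|a\<^sub>k - s|)\<close> of the superquadratic \<open>f\<close> at \<open>s = \<langle>\<Phi>(A) u, u\<rangle>\<close>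
  gives \<open>f(s) \<le> \<langle>\<Phi>(f(A)) u, u\<rangle> - \<langle>\<Phi>(f(|A - s I|)) u, u\<rangle>\<close>. For an orthonormal eigenbasis
  \<open>u\<^sub>j\<close> of \<open>\<Phi>(A)\<close> the numbers \<open>s\<^sub>j\<close> are the eigenvalues of \<open>\<Phi>(A)\<close>, so summing over \<open>j\<close> proves the
  inequality for this basis, hence for the infimum over all bases. That infimum is a genuine one
  because, \<open>f\<close> being bounded on \<open>[0, Tr A]\<close>, every sum is bounded below.

  The spectral theorem for Hermitian matrices, which underlies the functional calculus, is proved by
  maximising the Rayleigh quotient on the orthogonal complement of the eigenvectors already found.\<close>

section \<open>Inner products and adjoints\<close>

lemma cinner_add_left: "cinner (x + y) z = cinner x z + cinner y z"
  by (simp add: cinner_def sum.distrib distrib_right)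

lemma cinner_diff_left: "cinner (x - y) z = cinner x z - cinner y z"
  by (simp add: cinner_def sum_subtractf left_diff_distrib)

lemma cinner_add_right: "cinner x (y + z) = cinner x y + cinner x z"
  by (simp add: cinner_def sum.distrib distrib_left)

lemma cinner_scale_left: "cinner (c *s x) y = c * cinner x y"
  by (simp add: cinner_def sum_distrib_left mult.assoc)

lemma cinner_scale_right: "cinner x (c *s y) = cnj c * cinner x y"
  by (simp add: cinner_def sum_distrib_left algebra_simps)

lemma cinner_sum_left: "cinner (sum g A) y = (\<Sum>a\<in>A. cinner (g a) y)"
  unfolding cinner_def by (simp add: sum_component sum_distrib_right, rule sum.swap)

lemma cinner_zero_left [simp]: "cinner 0 y = 0"
  by (simp add: cinner_def)

lemma cnj_cinner: "cnj (cinner x y) = cinner y x"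
  by (simp add: cinner_def mult.commute)

lemma cinner_axis_left: "cinner (axis i 1) y = cnj (y $ i)"
proof -
  have "cinner (axis i 1) y = (\<Sum>k\<in>UNIV. if k = i then cnj (y $ i) else 0)"
    unfolding cinner_def axis_def by (rule sum.cong) auto
  then show ?thesis by simp
qed

lemma cinner_self: "cinner x x = complex_of_real ((norm x)\<^sup>2)"
proof -
  have "cinner x x = complex_of_real (\<Sum>i\<in>UNIV. (cmod (x$i))\<^sup>2)"
    unfolding cinner_def by (simp add: complex_norm_square[symmetric])
  then show ?thesis
    by (simp add: norm_vec_def L2_set_def sum_nonneg)
qed

lemma scaleR_eq_scalar_mult: "r *\<^sub>R x = complex_of_real r *s x"
  by (simp add: vec_eq_iff) (simp add: scaleR_conv_of_real)

lemma cinner_matrix_left: "cinner (M *v x) y = cinner x (adj M *v y)"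
  unfolding cinner_def adj_def matrix_vector_mult_def
  by (simp add: sum_distrib_left sum_distrib_right cnj_sum algebra_simps, subst sum.swap, simp add: algebra_simps)

lemma adj_diff: "adj (A - B) = adj A - adj B"
  by (simp add: adj_def vec_eq_iff)

lemma adj_cscale: "adj (cscale c A) = cscale (cnj c) (adj A)"
  by (simp add: adj_def cscale_def vec_eq_iff)

lemma adj_mat [simp]: "adj (mat c) = mat (cnj c)"
  by (simp add: adj_def mat_def vec_eq_iff)

lemma hermitian_cinner_swap: "hermitian H \<Longrightarrow> cinner (H *v x) y = cinner x (H *v y)"
  by (simp add: cinner_matrix_left hermitian_def)

lemma hermitian_cinner_real:
  "hermitian H \<Longrightarrow> cinner (H *v x) x = complex_of_real (Re (cinner (H *v x) x))"
  by (metis Reals_cnj_iff cnj_cinner hermitian_cinner_swap of_real_Re)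

lemma cscale_matrix_vector: "cscale c X *v u = c *s (X *v u)"
  by (simp add: vec_eq_iff cscale_def matrix_vector_mult_def sum_distrib_left mult.assoc)

section \<open>Unitary diagonalisation and the functional calculus\<close>

definition real_diag :: "('n \<Rightarrow> real) \<Rightarrow> complex^'n^'n" where
  "real_diag d = diagm (\<lambda>i. complex_of_real (d i))"

definition spectral_form :: "complex^'n^'n \<Rightarrow> ('n \<Rightarrow> real) \<Rightarrow> complex^'n^'n" where
  "spectral_form U d = U ** real_diag d ** adj U"

lemma matrix_mult_real_diag_entry: "(X ** real_diag d) $ i $ j = X $ i $ j * complex_of_real (d j)"
proof -
  have "(X ** real_diag d) $ i $ j = (\<Sum>k\<in>UNIV. if k = j then X $ i $ j * complex_of_real (d j) else 0)"
    unfolding real_diag_def diagm_def matrix_matrix_mult_def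
    by (simp only: vec_lambda_beta) (rule sum.cong, auto)
  then show ?thesis by simp
qed

lemma real_diag_matrix_mult_entry: "(real_diag d ** X) $ i $ j = complex_of_real (d i) * X $ i $ j"
proof -
  have "(real_diag d ** X) $ i $ j = (\<Sum>k\<in>UNIV. if k = i then complex_of_real (d i) * X $ i $ j else 0)"
    unfolding real_diag_def diagm_def matrix_matrix_mult_def
    by (simp only: vec_lambda_beta) (rule sum.cong, auto)
  then show ?thesis by simp
qed

lemma unitary_cancel:
  assumes "unitary U"
  shows "adj U ** (U ** X) = X" and "U ** (adj U ** X) = X"
  using assms by (metis matrix_mul_assoc matrix_mul_lid unitary_def)+

lemma real_diag_matrix_vector: "real_diag d *v y = (\<chi> k. complex_of_real (d k) * y $ k)"
proof -
  have "(real_diag d *v y) $ k = (\<Sum>j\<in>UNIV. if j = k then complex_of_real (d k) * y $ k else 0)" for k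
    unfolding real_diag_def diagm_def matrix_vector_mult_def
    by (simp only: vec_lambda_beta) (rule sum.cong, auto)
  then show ?thesis
    by (simp add: vec_eq_iff)
qed

lemma real_diag_mult: "real_diag d ** real_diag e = real_diag (\<lambda>i. d i * e i)"
  by (simp add: vec_eq_iff real_diag_matrix_mult_entry) (simp add: real_diag_def diagm_def)

lemma unitary_columns_orthonormal:
  assumes "unitary U"
  shows "cinner (column i U) (column j U) = (if i = j then 1 else 0)"
proof -
  have "(adj U ** U) $ j $ i = mat 1 $ j $ i"
    using assms by (simp add: unitary_def)
  then show ?thesis
    by (auto simp: matrix_matrix_mult_def adj_def mat_def cinner_def column_def mult.commute)
qed

lemma spectral_form_entry:
  "spectral_form U d $ i $ j = (\<Sum>k\<in>UNIV. U $ i $ k * complex_of_real (d k) * cnj (U $ j $ k))"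
proof -
  have "spectral_form U d $ i $ j = (\<Sum>k\<in>UNIV. (U ** real_diag d) $ i $ k * cnj (U $ j $ k))"
    by (simp add: spectral_form_def matrix_matrix_mult_def[of "U ** real_diag d"] adj_def)
  then show ?thesis
    by (simp add: matrix_mult_real_diag_entry)
qed

lemma spectral_form_add: "spectral_form U (\<lambda>i. d i + e i) = spectral_form U d + spectral_form U e"
  by (simp add: vec_eq_iff spectral_form_entry sum.distrib algebra_simps)

lemma spectral_form_scale: "spectral_form U (\<lambda>i. c * d i) = cscale (complex_of_real c) (spectral_form U d)"
  by (simp add: vec_eq_iff spectral_form_entry cscale_def sum_distrib_left algebra_simps)

lemma spectral_form_const:
  fixes U :: "complex^'n^'n"
  assumes "unitary U"
  shows "spectral_form U (\<lambda>i. c) = cscale (complex_of_real c) (mat 1)"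
proof -
  have "real_diag (\<lambda>i. 1) = (mat 1 :: complex^'n^'n)"
    by (simp add: real_diag_def diagm_def mat_def)
  then have "spectral_form U (\<lambda>i. 1) = mat 1"
    using assms by (simp add: spectral_form_def unitary_def)
  then show ?thesis
    using spectral_form_scale[of U c "\<lambda>i. 1"] by simp
qed

lemma hermitian_spectral_form: "hermitian (spectral_form U d)"
  by (simp add: hermitian_def vec_eq_iff spectral_form_entry adj_def cnj_sum mult.commute mult.left_commute)

lemma spectral_form_mult:
  assumes "unitary U"
  shows "spectral_form U d ** spectral_form U e = spectral_form U (\<lambda>i. d i * e i)"
proof -
  have "spectral_form U d ** spectral_form U e = U ** (real_diag d ** real_diag e) ** adj U"
    using assms by (simp add: spectral_form_def matrix_mul_assoc[symmetric] unitary_cancel)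
  then show ?thesis
    by (simp add: real_diag_mult spectral_form_def matrix_mul_assoc)
qed

lemma spectral_form_column:
  assumes "unitary U"
  shows "spectral_form U d *v column j U = complex_of_real (d j) *s column j U"
proof -
  have "spectral_form U d ** U = U ** real_diag d"
    using assms by (simp add: spectral_form_def matrix_mul_assoc[symmetric] unitary_def)
  then have "(spectral_form U d ** U) $ i $ j = U $ i $ j * complex_of_real (d j)" for i
    by (simp add: matrix_mult_real_diag_entry)
  then show ?thesis
    by (simp add: vec_eq_iff column_def matrix_matrix_mult_def matrix_vector_mult_def mult.commute)
qed

lemma spectral_form_unique:
  assumes U: "unitary U" and V: "unitary V" and eq: "spectral_form U d = spectral_form V e"
  shows "spectral_form U (\<lambda>i. g (d i)) = spectral_form V (\<lambda>i. g (e i))"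
proof -
  define W where "W = adj V ** U"
  have "W ** real_diag d = adj V ** spectral_form U d ** U"
    using U by (simp add: W_def spectral_form_def matrix_mul_assoc[symmetric] unitary_def)
  also have "\<dots> = adj V ** spectral_form V e ** U"
    by (simp add: eq)
  also have "\<dots> = real_diag e ** W"
    by (simp add: W_def spectral_form_def matrix_mul_assoc[symmetric] unitary_cancel[OF V])
  finally have intertwine: "W $ i $ j * complex_of_real (d j) = complex_of_real (e i) * W $ i $ j" for i j
    by (metis matrix_mult_real_diag_entry real_diag_matrix_mult_entry)
  have "W ** real_diag (\<lambda>i. g (d i)) = real_diag (\<lambda>i. g (e i)) ** W"
  proof -
    have "W $ i $ j = 0 \<or> d j = e i" for i j
      using intertwine[of i j] by (auto simp: mult.commute)
    then have "W $ i $ j * complex_of_real (g (d j)) = complex_of_real (g (e i)) * W $ i $ j" for i j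
      by (metis mult.commute mult_zero_left)
    then show ?thesis
      by (simp add: vec_eq_iff matrix_mult_real_diag_entry real_diag_matrix_mult_entry)
  qed
  have "V ** W = U"
    using V by (simp add: W_def matrix_mul_assoc unitary_def)
  then have "spectral_form U (\<lambda>i. g (d i)) = V ** (W ** real_diag (\<lambda>i. g (d i))) ** adj U"
    by (simp add: spectral_form_def matrix_mul_assoc)
  also have "\<dots> = V ** real_diag (\<lambda>i. g (e i)) ** (W ** adj U)"
    by (simp add: \<open>W ** real_diag (\<lambda>i. g (d i)) = real_diag (\<lambda>i. g (e i)) ** W\<close> matrix_mul_assoc)
  also have "W ** adj U = adj V"
    using U by (simp add: W_def matrix_mul_assoc[symmetric] unitary_def)
  finally show ?thesis
    by (simp add: spectral_form_def)
qed

lemma matfun_spectral_form: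
  assumes U: "unitary U"
  shows "matfun g (spectral_form U d) = spectral_form U (\<lambda>i. g (d i))"
proof -
  let ?P = "\<lambda>B. \<exists>V e. unitary V \<and> spectral_form U d = spectral_form V e
    \<and> B = spectral_form V (\<lambda>i. g (e i))"
  have "?P (matfun g (spectral_form U d))"
    unfolding matfun_def spectral_form_def[symmetric] real_diag_def[symmetric]
    by (rule someI[of ?P]) (use U in blast)
  then show ?thesis
    using spectral_form_unique[OF U] by metis
qed

lemma matfun_mabs_spectral_form_shift:
  assumes U: "unitary U"
  shows "matfun g (mabs (spectral_form U d - cscale (complex_of_real s) (mat 1)))
    = spectral_form U (\<lambda>i. g \<bar>d i - s\<bar>)"
proof -
  have shift: "spectral_form U d - cscale (complex_of_real s) (mat 1) = spectral_form U (\<lambda>i. d i - s)"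
    using spectral_form_add[of U d "\<lambda>i. - s"] spectral_form_const[OF U, of "- s"]
    by (simp add: vec_eq_iff cscale_def)
  have "mabs (spectral_form U (\<lambda>i. d i - s)) = spectral_form U (\<lambda>i. sqrt ((d i - s) * (d i - s)))"
    using hermitian_spectral_form[of U "\<lambda>i. d i - s"]
    by (simp add: mabs_def hermitian_def spectral_form_mult[OF U] matfun_spectral_form[OF U])
  then show ?thesis
    by (simp add: shift matfun_spectral_form[OF U])
qed

lemma trace_spectral_form:
  assumes "unitary U"
  shows "trace (spectral_form U d) = (\<Sum>j\<in>UNIV. complex_of_real (d j))"
proof -
  have "trace (spectral_form U d) = trace (adj U ** (U ** real_diag d))"
    unfolding spectral_form_def by (rule trace_mul_sym)
  also have "\<dots> = trace (real_diag d)"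
    using assms by (simp add: matrix_mul_assoc unitary_def)
  finally show ?thesis
    by (simp add: trace_def real_diag_def diagm_def)
qed

lemma trace_eq_sum_columns:
  assumes "unitary U"
  shows "trace M = (\<Sum>j\<in>UNIV. cinner (M *v column j U) (column j U))"
proof -
  have "trace M = trace ((M ** U) ** adj U)"
    using assms by (simp add: unitary_def matrix_mul_assoc[symmetric])
  also have "\<dots> = trace (adj U ** (M ** U))"
    by (rule trace_mul_sym)
  also have "\<dots> = (\<Sum>j\<in>UNIV. cinner (M *v column j U) (column j U))"
    unfolding trace_def cinner_def column_def matrix_vector_mult_def matrix_matrix_mult_def adj_def
    by (simp only: vec_lambda_beta mult.commute)
  finally show ?thesis .
qed

lemma psd_spectral_form_iff:
  assumes "unitary U"
  shows "psd (spectral_form U d) \<longleftrightarrow> (\<forall>i. 0 \<le> d i)"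
proof
  assume "psd (spectral_form U d)"
  then have "0 \<le> Re (cinner (spectral_form U d *v column i U) (column i U))" for i
    by (simp add: psd_def)
  then show "\<forall>i. 0 \<le> d i"
    using assms by (simp add: spectral_form_column cinner_scale_left unitary_columns_orthonormal)
next
  assume d: "\<forall>i. 0 \<le> d i"
  have "0 \<le> Re (cinner (spectral_form U d *v x) x)" for x
  proof -
    define y where "y = adj U *v x"
    have "cinner (spectral_form U d *v x) x = cinner (real_diag d *v y) y"
      by (simp add: spectral_form_def y_def cinner_matrix_left flip: matrix_vector_mul_assoc)
    also have "\<dots> = complex_of_real (\<Sum>k\<in>UNIV. d k * (cmod (y $ k))\<^sup>2)"
      by (simp only: cinner_def real_diag_matrix_vector vec_lambda_beta of_real_sum of_real_mult
          complex_norm_square mult.assoc)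
    finally show ?thesis
      using d by (simp add: sum_nonneg)
  qed
  then show "psd (spectral_form U d)"
    by (simp add: psd_def hermitian_spectral_form)
qed

section \<open>The spectral theorem\<close>

lemma hermitian_quadratic_form_add_scaleR:
  assumes "hermitian M"
  shows "Re (cinner (M *v (x + r *\<^sub>R y)) (x + r *\<^sub>R y))
    = Re (cinner (M *v x) x) + 2 * r * Re (cinner (M *v x) y) + r\<^sup>2 * Re (cinner (M *v y) y)"
proof -
  have "Re (cinner (M *v y) x) = Re (cinner (M *v x) y)"
    by (simp add: hermitian_cinner_swap[OF assms] flip: cnj_cinner[of "M *v x"])
  then show ?thesis
    by (simp add: scaleR_eq_scalar_mult matrix_vector_right_distrib vector_scalar_commute
        cinner_add_left cinner_add_right cinner_scale_left cinner_scale_right power2_eq_square algebra_simps)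
qed

lemma quadratic_nonneg_imp_linear_coeff_eq_0:
  fixes b c :: real
  assumes "\<forall>t. 0 \<le> 2 * t * b + t\<^sup>2 * c"
  shows "b = 0"
proof (rule ccontr)
  assume "b \<noteq> 0"
  define D where "D = \<bar>c\<bar> + 1"
  have "D > 0" "c < 2 * D"
    by (auto simp: D_def)
  have "2 * (- b / D) * b + (- b / D)\<^sup>2 * c = b\<^sup>2 * (c - 2 * D) / D\<^sup>2"
    using \<open>D > 0\<close> by (simp add: field_simps power2_eq_square)
  also have "\<dots> < 0"
    using \<open>b \<noteq> 0\<close> \<open>D > 0\<close> \<open>c < 2 * D\<close> by (simp add: divide_neg_pos mult_pos_neg)
  finally show False
    using assms by (meson not_le)
qed

lemma hermitian_nonneg_on_subspace_null_vector:
  assumes M: "hermitian M" and W: "subspace W" and nonneg: "\<forall>y\<in>W. 0 \<le> Re (cinner (M *v y) y)"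
    and x: "x \<in> W" "Re (cinner (M *v x) x) = 0" and y: "y \<in> W"
  shows "Re (cinner (M *v x) y) = 0"
proof (rule quadratic_nonneg_imp_linear_coeff_eq_0)
  show "\<forall>t. 0 \<le> 2 * t * Re (cinner (M *v x) y) + t\<^sup>2 * Re (cinner (M *v y) y)"
  proof
    fix t
    have "x + t *\<^sub>R y \<in> W"
      using W x y by (simp add: subspace_add subspace_scale)
    then have "0 \<le> Re (cinner (M *v (x + t *\<^sub>R y)) (x + t *\<^sub>R y))"
      using nonneg by blast
    then show "0 \<le> 2 * t * Re (cinner (M *v x) y) + t\<^sup>2 * Re (cinner (M *v y) y)"
      using hermitian_quadratic_form_add_scaleR[OF M, of x t y] x(2) by (simp add: algebra_simps)
  qed
qed

lemma quadratic_form_max_on_subspace: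
  fixes H :: "complex^'n^'n"
  assumes W: "subspace W" and z: "z \<in> W" "z \<noteq> 0"
  obtains x where "x \<in> W" "norm x = 1"
    "\<forall>y\<in>W. Re (cinner (H *v y) y) \<le> Re (cinner (H *v x) x) * (norm y)\<^sup>2"
proof -
  define g where "g x = Re (cinner (H *v x) x)" for x
  have "compact (W \<inter> sphere 0 1)"
    using compact_Int_closed[OF compact_sphere closed_subspace[OF W]] by (simp add: Int_commute)
  moreover have "(1 / norm z) *\<^sub>R z \<in> W \<inter> sphere 0 1"
    using W z by (simp add: subspace_scale)
  moreover have "continuous_on (W \<inter> sphere 0 1) g"
    unfolding g_def cinner_def matrix_vector_mult_def by (intro continuous_intros)
  ultimately obtain x where x: "x \<in> W" "norm x = 1" and max: "\<forall>y\<in>W \<inter> sphere 0 1. g y \<le> g x"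
    using continuous_attains_sup by (metis empty_iff Int_iff mem_sphere_0)
  have homogeneous: "g (r *\<^sub>R y) = r\<^sup>2 * g y" for r y
    by (simp add: g_def scaleR_eq_scalar_mult vector_scalar_commute
        cinner_scale_left cinner_scale_right power2_eq_square)
  have "g y \<le> g x * (norm y)\<^sup>2" if "y \<in> W" for y
  proof (cases "y = 0")
    case False
    have "(1 / norm y) *\<^sub>R y \<in> W \<inter> sphere 0 1"
      using W that False by (simp add: subspace_scale)
    then have "g ((1 / norm y) *\<^sub>R y) \<le> g x"
      using max by blast
    then have "g y / (norm y)\<^sup>2 \<le> g x"
      using homogeneous[of "1 / norm y" y] by (simp add: power_divide)
    then show ?thesis
      using False by (simp add: divide_le_eq)
  qed (simp add: g_def)
  then show thesis
    using that x by (simp add: g_def)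
qed

text \<open>A maximiser \<open>x\<close> of the Rayleigh quotient on \<open>W\<close>, with maximum \<open>\<lambda>\<close>, is a null vector of
  the form of \<open>\<lambda> I - H\<close>, which is nonnegative on \<open>W\<close>; the residual \<open>(\<lambda> I - H) x\<close> lies in \<open>W\<close>
  and is therefore orthogonal to itself.\<close>
lemma hermitian_invariant_subspace_has_eigenvector:
  fixes H :: "complex^'n^'n"
  assumes H: "hermitian H" and W: "subspace W" and inv: "\<forall>x\<in>W. H *v x \<in> W"
    and z: "z \<in> W" "z \<noteq> 0"
  shows "\<exists>x\<in>W. cinner x x = 1 \<and> (\<exists>lam. H *v x = complex_of_real lam *s x)"
proof -
  obtain x where x: "x \<in> W" "norm x = 1"
    and max: "\<forall>y\<in>W. Re (cinner (H *v y) y) \<le> Re (cinner (H *v x) x) * (norm y)\<^sup>2"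
    using quadratic_form_max_on_subspace[OF W z] by blast
  define lam where "lam = Re (cinner (H *v x) x)"
  define M where "M = cscale (complex_of_real lam) (mat 1) - H"
  have Mv: "M *v y = complex_of_real lam *s y - H *v y" for y
    by (simp add: M_def matrix_vector_mult_diff_rdistrib cscale_matrix_vector)
  have M: "hermitian M"
    using H by (simp add: M_def hermitian_def adj_diff adj_cscale)
  have form_M: "Re (cinner (M *v y) y) = lam * (norm y)\<^sup>2 - Re (cinner (H *v y) y)" for y
    by (simp add: Mv cinner_diff_left cinner_scale_left cinner_self)
  define r where "r = M *v x"
  have "r \<in> W"
    using W x inv by (simp add: r_def Mv subspace_diff subspace_scale scaleR_eq_scalar_mult[symmetric])
  then have "Re (cinner r r) = 0"
    using hermitian_nonneg_on_subspace_null_vector[OF M W] max x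
    by (simp add: r_def form_M lam_def mult.commute)
  then have "H *v x = complex_of_real lam *s x"
    by (simp add: r_def Mv cinner_self)
  moreover have "cinner x x = 1"
    using x by (simp add: cinner_self)
  ultimately show ?thesis
    using x by blast
qed

lemma exists_nonzero_orthogonal_to_orthonormal:
  fixes v :: "'i \<Rightarrow> complex^'n"
  assumes I: "finite I" "card I < CARD('n)"
    and orthonormal: "\<forall>i\<in>I. \<forall>j\<in>I. cinner (v i) (v j) = (if i = j then 1 else 0)"
  shows "\<exists>z. z \<noteq> 0 \<and> (\<forall>j\<in>I. cinner z (v j) = 0)"
proof (rule ccontr)
  assume none: "\<not> ?thesis"
  define P where "P z = z - (\<Sum>j\<in>I. cinner z (v j) *s v j)" for z
  have "cinner (P z) (v m) = 0" if "m \<in> I" for z m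
  proof -
    have "(\<Sum>j\<in>I. cinner z (v j) * cinner (v j) (v m)) = (\<Sum>j\<in>I. if j = m then cinner z (v m) else 0)"
      using orthonormal that by (intro sum.cong) auto
    then show ?thesis
      using I that by (simp add: P_def cinner_diff_left cinner_sum_left cinner_scale_left)
  qed
  then have P0: "P z = 0" for z
    using none by blast
  \<comment> \<open>so the \<open>v j\<close> span everything, and comparing traces of the identity gives \<open>card I = CARD('n)\<close>\<close>
  have "1 = (\<Sum>j\<in>I. v j $ k * cnj (v j $ k))" for k
  proof -
    have "axis k 1 = (\<Sum>j\<in>I. cinner (axis k 1) (v j) *s v j)"
      using P0[of "axis k 1"] unfolding P_def by simp
    then have "axis k (1::complex) $ k = (\<Sum>j\<in>I. cnj (v j $ k) *s v j) $ k"
      by (simp add: cinner_axis_left)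
    then show ?thesis
      by (simp add: axis_def sum_component mult.commute)
  qed
  then have "of_nat CARD('n) = (\<Sum>k\<in>UNIV. \<Sum>j\<in>I. v j $ k * cnj (v j $ k))"
    by simp
  also have "\<dots> = (\<Sum>j\<in>I. cinner (v j) (v j))"
    unfolding cinner_def by (rule sum.swap)
  also have "\<dots> = of_nat (card I)"
    using orthonormal by simp
  finally show False
    using I by (simp only: of_nat_eq_iff)
qed

lemma hermitian_orthonormal_eigenvectors:
  fixes H :: "complex^'n^'n" and I :: "'n set"
  assumes H: "hermitian H"
  shows "\<exists>v d. (\<forall>i\<in>I. \<forall>j\<in>I. cinner (v i) (v j) = (if i = j then 1 else 0))
    \<and> (\<forall>i\<in>I. H *v v i = complex_of_real (d i) *s v i)"
proof -
  have "finite I" by simp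
  then show ?thesis
  proof (induction rule: finite_induct)
    case (insert i I)
    then obtain v d where orthonormal: "\<forall>i\<in>I. \<forall>j\<in>I. cinner (v i) (v j) = (if i = j then 1 else 0)"
      and eigen: "\<forall>i\<in>I. H *v v i = complex_of_real (d i) *s v i"
      by blast
    define W where "W = {x. \<forall>j\<in>I. cinner x (v j) = 0}"
    have "card I < CARD('n)"
      using insert card_mono[of UNIV "insert i I"] by simp
    then obtain z where "z \<in> W" "z \<noteq> 0"
      using exists_nonzero_orthogonal_to_orthonormal[OF \<open>finite I\<close> _ orthonormal] by (auto simp: W_def)
    moreover have "subspace W"
      by (simp add: W_def subspace_def cinner_add_left scaleR_eq_scalar_mult cinner_scale_left)
    moreover have "\<forall>x\<in>W. H *v x \<in> W"
      using eigen by (simp add: W_def hermitian_cinner_swap[OF H] cinner_scale_right)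
    ultimately obtain x lam where x: "x \<in> W" "cinner x x = 1" "H *v x = complex_of_real lam *s x"
      using hermitian_invariant_subspace_has_eigenvector[OF H] by metis
    have "cinner (v j) x = 0" if "j \<in> I" for j
      using x(1) that cnj_cinner[of x "v j"] by (simp add: W_def)
    then have "\<forall>k\<in>insert i I. \<forall>j\<in>insert i I.
        cinner ((v(i := x)) k) ((v(i := x)) j) = (if k = j then 1 else 0)"
      using orthonormal x(1,2) insert.hyps(2) by (auto simp: W_def)
    moreover have "\<forall>k\<in>insert i I. H *v (v(i := x)) k = complex_of_real ((d(i := lam)) k) *s (v(i := x)) k"
      using eigen x(3) insert.hyps(2) by auto
    ultimately show ?case
      by blast
  qed simp
qed

theorem hermitian_spectral_decomposition:
  fixes H :: "complex^'n^'n"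
  assumes H: "hermitian H"
  obtains U d where "unitary U" "H = spectral_form U d"
proof -
  obtain v :: "'n \<Rightarrow> complex^'n" and d where orthonormal: "\<forall>i j. cinner (v i) (v j) = (if i = j then 1 else 0)"
    and eigen: "\<forall>i. H *v v i = complex_of_real (d i) *s v i"
    using hermitian_orthonormal_eigenvectors[OF H, where I = UNIV] by blast
  define U :: "complex^'n^'n" where "U = (\<chi> a b. v b $ a)"
  have "adj U ** U = mat 1"
    using orthonormal by (simp add: vec_eq_iff U_def adj_def matrix_matrix_mult_def mat_def cinner_def mult.commute)
  moreover then have "U ** adj U = mat 1"
    using matrix_left_right_inverse by blast
  ultimately have U: "unitary U"
    by (simp add: unitary_def)
  have "(H ** U) $ a $ b = (U ** real_diag d) $ a $ b" for a b
  proof -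
    have "(H ** U) $ a $ b = (H *v v b) $ a"
      by (simp add: U_def matrix_matrix_mult_def matrix_vector_mult_def)
    then show ?thesis
      using eigen by (simp add: matrix_mult_real_diag_entry U_def mult.commute)
  qed
  then have "H ** U = U ** real_diag d"
    by (simp add: vec_eq_iff)
  have "H = H ** U ** adj U"
    using U by (simp add: unitary_def flip: matrix_mul_assoc)
  also have "\<dots> = spectral_form U d"
    by (simp add: \<open>H ** U = U ** real_diag d\<close> spectral_form_def)
  finally have "H = spectral_form U d" .
  with U show thesis
    using that by blast
qed

section \<open>States induced by a positive unital map\<close>

definition spectral_state ::
    "(complex^'n^'n \<Rightarrow> complex^'m^'m) \<Rightarrow> complex^'n^'n \<Rightarrow> complex^'m \<Rightarrow> ('n \<Rightarrow> real) \<Rightarrow> real" where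
  "spectral_state \<Phi> V u g = Re (cinner (\<Phi> (spectral_form V g) *v u) u)"

lemma spectral_state_add:
  "clinear_map \<Phi> \<Longrightarrow> spectral_state \<Phi> V u (\<lambda>k. x k + y k) = spectral_state \<Phi> V u x + spectral_state \<Phi> V u y"
  by (simp add: spectral_state_def spectral_form_add clinear_map_def matrix_vector_mult_add_rdistrib
      cinner_add_left)

lemma spectral_state_scale:
  "clinear_map \<Phi> \<Longrightarrow> spectral_state \<Phi> V u (\<lambda>k. c * x k) = c * spectral_state \<Phi> V u x"
  by (simp add: spectral_state_def spectral_form_scale clinear_map_def cscale_matrix_vector
      cinner_scale_left)

lemma spectral_state_const:
  assumes "clinear_map \<Phi>" "unital_map \<Phi>" "unitary V" "cinner u u = 1"
  shows "spectral_state \<Phi> V u (\<lambda>k. c) = c"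
  using assms by (simp add: spectral_state_def spectral_form_const clinear_map_def unital_map_def
      cscale_matrix_vector cinner_scale_left)

lemma spectral_state_mono:
  assumes \<Phi>: "clinear_map \<Phi>" "positive_map \<Phi>" and V: "unitary V" and le: "\<forall>k. x k \<le> y k"
  shows "spectral_state \<Phi> V u x \<le> spectral_state \<Phi> V u y"
proof -
  have "psd (\<Phi> (spectral_form V (\<lambda>k. y k - x k)))"
    using \<Phi>(2) le by (simp add: positive_map_def psd_spectral_form_iff[OF V])
  then have "0 \<le> spectral_state \<Phi> V u (\<lambda>k. y k - x k)"
    by (simp add: spectral_state_def psd_def)
  moreover have "spectral_state \<Phi> V u y = spectral_state \<Phi> V u x + spectral_state \<Phi> V u (\<lambda>k. y k - x k)"
    using spectral_state_add[OF \<Phi>(1), of V u x "\<lambda>k. y k - x k"] by simp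
  ultimately show ?thesis
    by linarith
qed

lemma superquadratic_spectral_state:
  assumes \<Phi>: "clinear_map \<Phi>" "positive_map \<Phi>" "unital_map \<Phi>" and V: "unitary V" and u: "cinner u u = 1"
    and f: "superquadratic f" and a: "\<forall>k. 0 \<le> a k"
  defines "s \<equiv> spectral_state \<Phi> V u a"
  shows "f s \<le> spectral_state \<Phi> V u (\<lambda>k. f (a k)) - spectral_state \<Phi> V u (\<lambda>k. f \<bar>a k - s\<bar>)"
proof -
  let ?\<omega> = "spectral_state \<Phi> V u"
  have "0 \<le> s"
    using spectral_state_mono[OF \<Phi>(1,2) V a, of u] spectral_state_const[OF \<Phi>(1,3) V u, of 0]
    by (simp add: s_def)
  then obtain C where C: "\<forall>t\<ge>0. f s + C * (t - s) + f \<bar>t - s\<bar> \<le> f t"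
    using f by (auto simp: superquadratic_def)
  have "?\<omega> (\<lambda>k. (f s - C * s) + (C * a k + f \<bar>a k - s\<bar>)) \<le> ?\<omega> (\<lambda>k. f (a k))"
    using C a by (intro spectral_state_mono[OF \<Phi>(1,2) V]) (auto simp: algebra_simps)
  moreover have "?\<omega> (\<lambda>k. (f s - C * s) + (C * a k + f \<bar>a k - s\<bar>)) = f s + ?\<omega> (\<lambda>k. f \<bar>a k - s\<bar>)"
    by (simp add: spectral_state_add[OF \<Phi>(1)] spectral_state_scale[OF \<Phi>(1)]
        spectral_state_const[OF \<Phi>(1,3) V u] s_def)
  ultimately show ?thesis
    by linarith
qed

section \<open>The trace inequality\<close>

definition deviation_sum ::
    "(real \<Rightarrow> real) \<Rightarrow> (complex^'n^'n \<Rightarrow> complex^'m^'m) \<Rightarrow> complex^'n^'n \<Rightarrow> ('m \<Rightarrow> complex^'m) \<Rightarrow> real" where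
  "deviation_sum f \<Phi> A u =
    (\<Sum>j\<in>UNIV. Re (cinner (\<Phi> (matfun f (mabs (A - cscale (cinner (\<Phi> A *v u j) (u j)) (mat 1)))) *v u j) (u j)))"

lemma deviation_sum_spectral_form:
  assumes V: "unitary V" and herm: "hermitian (\<Phi> (spectral_form V a))"
  shows "deviation_sum f \<Phi> (spectral_form V a) u
    = (\<Sum>j\<in>UNIV. spectral_state \<Phi> V (u j) (\<lambda>k. f \<bar>a k - spectral_state \<Phi> V (u j) a\<bar>))"
proof -
  have "cinner (\<Phi> (spectral_form V a) *v u j) (u j) = complex_of_real (spectral_state \<Phi> V (u j) a)" for j
    using hermitian_cinner_real[OF herm] by (simp add: spectral_state_def)
  then have "deviation_sum f \<Phi> (spectral_form V a) u = (\<Sum>j\<in>UNIV. Re (cinner (\<Phi> (matfun f (mabs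
      (spectral_form V a - cscale (complex_of_real (spectral_state \<Phi> V (u j) a)) (mat 1)))) *v u j) (u j)))"
    by (simp add: deviation_sum_def)
  then show ?thesis
    by (simp add: matfun_mabs_spectral_form_shift[OF V] spectral_state_def)
qed

lemma trace_matfun_le_at_eigenbasis:
  assumes \<Phi>: "clinear_map \<Phi>" "positive_map \<Phi>" "unital_map \<Phi>" and f: "superquadratic f"
    and V: "unitary V" and a: "\<forall>k. 0 \<le> a k"
    and U: "unitary U" and eigen: "\<Phi> (spectral_form V a) = spectral_form U l"
  shows "Re (trace (matfun f (\<Phi> (spectral_form V a))))
    \<le> Re (trace (\<Phi> (matfun f (spectral_form V a)))) - deviation_sum f \<Phi> (spectral_form V a) (\<lambda>j. column j U)"
proof -
  let ?\<omega> = "\<lambda>j. spectral_state \<Phi> V (column j U)"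
  have u: "cinner (column j U) (column j U) = 1" for j
    using unitary_columns_orthonormal[OF U] by simp
  have l: "l j = ?\<omega> j a" for j
    using u by (simp add: spectral_state_def eigen spectral_form_column[OF U] cinner_scale_left)
  have "Re (trace (matfun f (\<Phi> (spectral_form V a)))) = (\<Sum>j\<in>UNIV. f (?\<omega> j a))"
    by (simp add: eigen matfun_spectral_form[OF U] trace_spectral_form[OF U] l)
  also have "\<dots> \<le> (\<Sum>j\<in>UNIV. ?\<omega> j (\<lambda>k. f (a k)) - ?\<omega> j (\<lambda>k. f \<bar>a k - ?\<omega> j a\<bar>))"
    by (intro sum_mono superquadratic_spectral_state[OF \<Phi> V u f a])
  also have "\<dots> = Re (trace (\<Phi> (matfun f (spectral_form V a)))) - deviation_sum f \<Phi> (spectral_form V a) (\<lambda>j. column j U)"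
    by (simp add: sum_subtractf deviation_sum_spectral_form[OF V] eigen hermitian_spectral_form
        trace_eq_sum_columns[OF U] matfun_spectral_form[OF V] spectral_state_def)
  finally show ?thesis .
qed

lemma spectral_state_deviation_ge:
  assumes \<Phi>: "clinear_map \<Phi>" "positive_map \<Phi>" "unital_map \<Phi>" and V: "unitary V" and u: "cinner u u = 1"
    and a: "\<forall>k. 0 \<le> a k \<and> a k \<le> T" and K: "\<forall>x\<in>{0..T}. \<bar>f x\<bar> \<le> K"
  shows "- K \<le> spectral_state \<Phi> V u (\<lambda>k. f \<bar>a k - spectral_state \<Phi> V u a\<bar>)"
proof -
  let ?\<omega> = "spectral_state \<Phi> V u"
  have "?\<omega> (\<lambda>k. 0) \<le> ?\<omega> a" "?\<omega> a \<le> ?\<omega> (\<lambda>k. T)"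
    using a by (simp_all add: spectral_state_mono[OF \<Phi>(1,2) V])
  then have "0 \<le> ?\<omega> a \<and> ?\<omega> a \<le> T"
    by (simp add: spectral_state_const[OF \<Phi>(1,3) V u])
  then have "\<bar>a k - ?\<omega> a\<bar> \<in> {0..T}" for k
    using spec[OF a, of k] by (auto simp: abs_le_iff)
  then have "\<bar>f \<bar>a k - ?\<omega> a\<bar>\<bar> \<le> K" for k
    using K by blast
  then have "\<forall>k. - K \<le> f \<bar>a k - ?\<omega> a\<bar>"
    using abs_le_D2 minus_le_iff by blast
  then have "?\<omega> (\<lambda>k. - K) \<le> ?\<omega> (\<lambda>k. f \<bar>a k - ?\<omega> a\<bar>)"
    by (rule spectral_state_mono[OF \<Phi>(1,2) V])
  then show ?thesis
    by (simp add: spectral_state_const[OF \<Phi>(1,3) V u])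
qed

lemma deviation_sum_bdd_below:
  fixes \<Phi> :: "complex^'n^'n \<Rightarrow> complex^'m^'m"
  assumes \<Phi>: "clinear_map \<Phi>" "positive_map \<Phi>" "unital_map \<Phi>" and f: "continuous_on {0..} f"
    and V: "unitary V" and a: "\<forall>k. 0 \<le> a k"
  shows "bdd_below (deviation_sum f \<Phi> (spectral_form V a) ` {u. orthonormal_basis u})"
proof -
  define T where "T = (\<Sum>k\<in>UNIV. a k)"
  have aT: "\<forall>k. 0 \<le> a k \<and> a k \<le> T"
    using a by (auto simp: T_def intro: member_le_sum)
  have "bounded (f ` {0..T})"
    using f by (intro compact_imp_bounded compact_continuous_image) (auto intro: continuous_on_subset)
  then obtain K where K: "\<forall>x\<in>{0..T}. \<bar>f x\<bar> \<le> K"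
    by (auto simp: bounded_iff)
  have "psd (\<Phi> (spectral_form V a))"
    using \<Phi>(2) a by (simp add: positive_map_def psd_spectral_form_iff[OF V])
  then have herm: "hermitian (\<Phi> (spectral_form V a))"
    by (simp add: psd_def)
  have "- (real CARD('m) * K) \<le> deviation_sum f \<Phi> (spectral_form V a) w"
    if "orthonormal_basis w" for w
  proof -
    have "cinner (w j) (w j) = 1" for j
      using that by (simp add: orthonormal_basis_def)
    then have "(\<Sum>j\<in>(UNIV :: 'm set). - K)
        \<le> (\<Sum>j\<in>UNIV. spectral_state \<Phi> V (w j) (\<lambda>k. f \<bar>a k - spectral_state \<Phi> V (w j) a\<bar>))"
      by (intro sum_mono spectral_state_deviation_ge[OF \<Phi> V _ aT K])
    then show ?thesis
      by (simp add: deviation_sum_spectral_form[where \<Phi> = \<Phi>, OF V herm])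
  qed
  then show ?thesis
    by (intro bdd_belowI2) simp
qed

theorem proposition2p9:
  fixes f :: "real \<Rightarrow> real"
    and \<Phi> :: "complex^'n^'n \<Rightarrow> complex^'m^'m"
    and A :: "complex^'n^'n"
  assumes "continuous_on {0..} f"
    and "superquadratic f"
    and "clinear_map \<Phi>" and "positive_map \<Phi>" and "unital_map \<Phi>"
    and "psd A"
  shows "Re (trace (matfun f (\<Phi> A)))
     \<le> Re (trace (\<Phi> (matfun f A)))
       - (INF u \<in> {u. orthonormal_basis u}.
            (\<Sum>j\<in>UNIV. Re (cinner (\<Phi> (matfun f (mabs (A - cscale (cinner (\<Phi> A *v u j) (u j)) (mat 1)))) *v u j) (u j))))"
proof -
  note f = assms(1,2) and \<Phi> = assms(3-5)
  obtain V a where V: "unitary V" and A: "A = spectral_form V a"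
    using hermitian_spectral_decomposition \<open>psd A\<close> unfolding psd_def by blast
  have a: "\<forall>k. 0 \<le> a k"
    using \<open>psd A\<close> by (simp add: A psd_spectral_form_iff[OF V])
  have "psd (\<Phi> A)"
    using \<Phi>(2) \<open>psd A\<close> by (simp add: positive_map_def)
  then obtain U l where U: "unitary U" and eigen: "\<Phi> A = spectral_form U l"
    using hermitian_spectral_decomposition unfolding psd_def by blast
  have "orthonormal_basis (\<lambda>j. column j U)"
    by (simp add: orthonormal_basis_def unitary_columns_orthonormal[OF U])
  then have "(INF u \<in> {u. orthonormal_basis u}. deviation_sum f \<Phi> A u) \<le> deviation_sum f \<Phi> A (\<lambda>j. column j U)"
    using deviation_sum_bdd_below[OF \<Phi> f(1) V a] by (auto simp: A intro: cInf_lower)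
  moreover have "Re (trace (matfun f (\<Phi> A)))
      \<le> Re (trace (\<Phi> (matfun f A))) - deviation_sum f \<Phi> A (\<lambda>j. column j U)"
    using trace_matfun_le_at_eigenbasis[OF \<Phi> f(2) V a U] eigen by (simp add: A)
  ultimately show ?thesis
    unfolding deviation_sum_def by linarith
qed

end
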